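(* Let $\mathbb{A},\mathbb{B}$ be real square matrices of the same size such that $\mathbb{A}$ is a non-singular symmetric matrix with exactly one negative eigenvalue and $\mathbb{A}\mathbb{B}$ is skew-symmetric. Then $\mathbb{A}+\mathbb{B}$ is invertible and has exactly one negative eigenvalue, whose geometric multiplicity is $1$. *)

theory Defs
  imports "Jordan_Normal_Form.Jordan_Normal_Form_Uniqueness"
begin

definition neg_eig_count :: "real mat \<Rightarrow> nat" where
  "neg_eig_count A = (\<Sum>k \<in> {k. eigenvalue A k \<and> k < 0}. Polynomial.order k (char_poly A))"

definition geom_mult :: "real mat \<Rightarrow> real \<Rightarrow> nat" where
  "geom_mult A k = dim_gen_eigenspace A k 1"

end

theory Submission
  imports Defs "HOL-Analysis.Function_Topology" "HOL-Analysis.Convex"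
begin

text \<open>Write \<open>M = A + B\<close>. As \<open>AB\<close> is skew-symmetric, \<open>x \<bullet> AMy + y \<bullet> AMx = 2 (Ax \<bullet> Ay)\<close>;
  for eigenvectors \<open>Mx = lx\<close>, \<open>My = my\<close> this gives \<open>l (x \<bullet> Ax) = |Ax|\<^sup>2\<close> and
  \<open>(l + m) (x \<bullet> Ay) = 2 (Ax \<bullet> Ay)\<close>. So \<open>M\<close> is nonsingular, and the eigenvectors of \<open>M\<close> with
  negative eigenvalues are negative vectors of the quadratic form of \<open>A\<close>. Two independent such
  eigenvectors would span a plane on which this form is negative definite (for distinct
  eigenvalues by Cauchy-Schwarz), which is impossible when \<open>A\<close> has a single negative
  eigenvalue; this gives uniqueness and geometric multiplicity one. For existence, all \<open>A + tB\<close>,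
  \<open>0 \<le> t \<le> 1\<close>, are nonsingular, so \<open>det M\<close> has the sign of \<open>det A < 0\<close>, and a real matrix of
  negative determinant has a negative eigenvalue by the intermediate value theorem. The
  eigenvalues of \<open>A\<close> are related to its quadratic form by the spectral theorem, proved by
  minimising the Rayleigh quotient.\<close>

section \<open>The spectral theorem for real symmetric matrices\<close>

text \<open>Vectors of \<open>\<real>\<^sup>n\<close> are encoded as functions \<open>nat \<Rightarrow> real\<close> of which only the first \<open>n\<close>
  values matter, so that (after truncation) the unit sphere is a compact subset of the product
  topology.\<close>

definition fdot :: "nat \<Rightarrow> (nat \<Rightarrow> real) \<Rightarrow> (nat \<Rightarrow> real) \<Rightarrow> real" where
  "fdot n f g = (\<Sum>i<n. f i * g i)"

definition fapp :: "nat \<Rightarrow> real mat \<Rightarrow> (nat \<Rightarrow> real) \<Rightarrow> nat \<Rightarrow> real" where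
  "fapp n A f = (\<lambda>i. \<Sum>j<n. A $$ (i,j) * f j)"

definition fquad :: "nat \<Rightarrow> real mat \<Rightarrow> (nat \<Rightarrow> real) \<Rightarrow> real" where
  "fquad n A f = fdot n f (fapp n A f)"

definition ftrunc :: "nat \<Rightarrow> (nat \<Rightarrow> real) \<Rightarrow> nat \<Rightarrow> real" where
  "ftrunc n f = (\<lambda>i. if i < n then f i else 0)"

definition unit_orth :: "nat \<Rightarrow> (nat \<Rightarrow> nat \<Rightarrow> real) \<Rightarrow> nat \<Rightarrow> (nat \<Rightarrow> real) \<Rightarrow> bool" where
  "unit_orth n U k f \<longleftrightarrow> fdot n f f = 1 \<and> (\<forall>m<k. fdot n f (U m) = 0)"

definition orthonormal_fam :: "nat \<Rightarrow> (nat \<Rightarrow> nat \<Rightarrow> real) \<Rightarrow> nat \<Rightarrow> bool" where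
  "orthonormal_fam n U k \<longleftrightarrow> (\<forall>m<k. \<forall>m'<k. fdot n (U m) (U m') = (if m = m' then 1 else 0))"

definition rayleigh_min :: "nat \<Rightarrow> real mat \<Rightarrow> (nat \<Rightarrow> nat \<Rightarrow> real) \<Rightarrow> nat \<Rightarrow> (nat \<Rightarrow> real) \<Rightarrow> bool" where
  "rayleigh_min n A U k u \<longleftrightarrow>
    unit_orth n U k u \<and> (\<forall>f. unit_orth n U k f \<longrightarrow> fquad n A u \<le> fquad n A f)"

lemma fdot_ftrunc [simp]: "fdot n (ftrunc n f) g = fdot n f g" "fdot n g (ftrunc n f) = fdot n g f"
  unfolding fdot_def ftrunc_def by (auto intro!: sum.cong)

lemma fapp_ftrunc [simp]: "fapp n A (ftrunc n f) = fapp n A f"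
  unfolding fapp_def ftrunc_def by (auto intro!: sum.cong)

lemma fdot_commute: "fdot n f g = fdot n g f"
  unfolding fdot_def by (simp add: mult.commute)

lemma fdot_self_nonneg: "0 \<le> fdot n f f"
  unfolding fdot_def by (auto intro: sum_nonneg)

lemma fdot_self_eq_0D: "fdot n f f = 0 \<Longrightarrow> i < n \<Longrightarrow> f i = 0"
  unfolding fdot_def by (subst (asm) sum_nonneg_eq_0_iff) auto

lemma fdot_eq_0_if_self_eq_0:
  assumes "fdot n f f = 0"
  shows "fdot n f g = 0"
  unfolding fdot_def by (rule sum.neutral) (simp add: fdot_self_eq_0D[OF assms])

lemma square_le_fdot_self:
  assumes "i < n"
  shows "(f i)\<^sup>2 \<le> fdot n f f"
proof -
  have "(f i)\<^sup>2 = (\<Sum>j\<in>{i}. f j * f j)" by (simp add: power2_eq_square)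
  also have "\<dots> \<le> fdot n f f" unfolding fdot_def
    by (rule sum_mono2) (use assms in auto)
  finally show ?thesis .
qed

lemma fdot_lincomb_left: "fdot n (\<lambda>i. a * f i + b * g i) h = a * fdot n f h + b * fdot n g h"
  unfolding fdot_def by (simp add: algebra_simps sum.distrib sum_distrib_left)

lemma fdot_lincomb_right: "fdot n h (\<lambda>i. a * f i + b * g i) = a * fdot n h f + b * fdot n h g"
  unfolding fdot_def by (simp add: algebra_simps sum.distrib sum_distrib_left)

lemma fdot_scale_left: "fdot n (\<lambda>i. a * f i) h = a * fdot n f h"
  unfolding fdot_def by (simp add: algebra_simps sum_distrib_left)

lemma fdot_scale_right: "fdot n h (\<lambda>i. a * f i) = a * fdot n h f"
  unfolding fdot_def by (simp add: algebra_simps sum_distrib_left)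

lemma fapp_lincomb: "fapp n A (\<lambda>i. a * f i + b * g i) = (\<lambda>i. a * fapp n A f i + b * fapp n A g i)"
  unfolding fapp_def by (simp add: algebra_simps sum.distrib sum_distrib_left)

lemma fapp_scale: "fapp n A (\<lambda>i. a * f i) = (\<lambda>i. a * fapp n A f i)"
  unfolding fapp_def by (simp add: algebra_simps sum_distrib_left)

lemma fdot_cong_right: "(\<And>i. i < n \<Longrightarrow> f i = g i) \<Longrightarrow> fdot n h f = fdot n h g"
  unfolding fdot_def by (auto intro!: sum.cong)

lemma fdot_indicator_left:
  assumes "j < n"
  shows "fdot n (\<lambda>l. if l = j then 1 else 0) g = g j"
proof -
  have "fdot n (\<lambda>l. if l = j then 1 else 0) g = (\<Sum>i<n. if i = j then g i else 0)"
    unfolding fdot_def by (intro sum.cong) auto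
  also have "\<dots> = g j" using assms by simp
  finally show ?thesis .
qed

lemma fdot_fapp_symmetric:
  assumes A: "A \<in> carrier_mat n n" and sym: "transpose_mat A = A"
  shows "fdot n f (fapp n A g) = fdot n (fapp n A f) g"
proof -
  have entry: "A $$ (i,j) = A $$ (j,i)" if "i < n" "j < n" for i j
    using arg_cong[OF sym, of "\<lambda>M. M $$ (j,i)"] A that by auto
  have "fdot n f (fapp n A g) = (\<Sum>i<n. \<Sum>j<n. f i * A $$ (i,j) * g j)"
    unfolding fdot_def fapp_def by (simp add: sum_distrib_left mult.assoc)
  also have "\<dots> = (\<Sum>j<n. \<Sum>i<n. f i * A $$ (i,j) * g j)" by (rule sum.swap)
  also have "\<dots> = (\<Sum>j<n. (\<Sum>i<n. A $$ (j,i) * f i) * g j)"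
    unfolding sum_distrib_right by (intro sum.cong refl) (simp add: entry)
  also have "\<dots> = fdot n (fapp n A f) g" unfolding fdot_def fapp_def ..
  finally show ?thesis .
qed

lemma fdot_rescale_unit:
  assumes "fdot n z z \<noteq> 0"
  defines "c \<equiv> 1 / sqrt (fdot n z z)"
  shows "c * c = 1 / fdot n z z" "fdot n (\<lambda>i. c * z i) (\<lambda>i. c * z i) = 1"
proof -
  have pos: "0 < fdot n z z" using assms(1) fdot_self_nonneg[of n z] by linarith
  then show cc: "c * c = 1 / fdot n z z" unfolding c_def by (simp add: real_sqrt_mult[symmetric])
  show "fdot n (\<lambda>i. c * z i) (\<lambda>i. c * z i) = 1"
    unfolding fdot_scale_left fdot_scale_right using cc pos by (simp add: mult.assoc[symmetric])
qed

lemma unit_orth_rescale: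
  assumes "fdot n z z \<noteq> 0" and "\<forall>m<k. fdot n z (U m) = 0"
  shows "unit_orth n U k (\<lambda>i. (1 / sqrt (fdot n z z)) * z i)"
  unfolding unit_orth_def
proof (intro conjI allI impI fdot_rescale_unit(2)[OF assms(1)])
  show "fdot n (\<lambda>i. (1 / sqrt (fdot n z z)) * z i) (U m) = 0" if "m < k" for m
    unfolding fdot_scale_left using assms(2) that by simp
qed

lemma compact_cube: "compact (Pi UNIV (\<lambda>i. if i < n then {-1..1::real} else {0}))"
proof -
  have "compactin (product_topology (\<lambda>i. euclidean) UNIV)
      (PiE UNIV (\<lambda>i. if i < n then {-1..1::real} else {0}))"
    by (subst compactin_PiE) auto
  then show ?thesis
    by (simp add: PiE_def euclidean_product_topology flip: compactin_euclidean_iff)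
qed

lemma continuous_on_fquad: "continuous_on UNIV (fquad n A)"
proof -
  have "continuous_on UNIV (\<lambda>f::nat \<Rightarrow> real. fdot n f (fapp n A f))"
    unfolding fdot_def fapp_def by (intro continuous_intros continuous_on_product_coordinates)
  then show ?thesis by (simp add: fquad_def[abs_def])
qed

lemma rayleigh_min_exists:
  assumes "\<exists>f. unit_orth n U k f"
  shows "\<exists>u. rayleigh_min n A U k u"
proof -
  define S where "S = Pi UNIV (\<lambda>i. if i < n then {-1..1::real} else {0}) \<inter> {f. fdot n f f = 1}
     \<inter> (\<Inter>m\<in>{..<k}. {f. fdot n f (U m) = 0})"
  have S_iff: "f \<in> S \<longleftrightarrow> f \<in> Pi UNIV (\<lambda>i. if i < n then {-1..1} else {0}) \<and> unit_orth n U k f"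
    for f unfolding S_def unit_orth_def by blast
  have compact: "compact S" unfolding S_def fdot_def
    by (intro compact_Int_closed compact_cube closed_INT ballI closed_Collect_eq
        continuous_intros continuous_on_product_coordinates)
  have trunc_in_S: "ftrunc n f \<in> S" if "unit_orth n U k f" for f
  proof -
    have "\<bar>f i\<bar> \<le> 1" if "i < n" for i
      using square_le_fdot_self[OF that, of f] \<open>unit_orth n U k f\<close>
      by (simp add: unit_orth_def abs_square_le_1)
    then have "ftrunc n f \<in> Pi UNIV (\<lambda>i. if i < n then {-1..1} else {0})"
      by (auto simp: ftrunc_def abs_le_iff)
    moreover have "unit_orth n U k (ftrunc n f)" using that by (simp add: unit_orth_def)
    ultimately show ?thesis using S_iff by blast
  qed
  then have nonempty: "S \<noteq> {}" using assms by blast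
  have "continuous_on S (fquad n A)" using continuous_on_fquad by (rule continuous_on_subset) simp
  then obtain u where u: "u \<in> S" and min: "\<forall>f\<in>S. fquad n A u \<le> fquad n A f"
    using continuous_attains_inf[OF compact nonempty] by blast
  have "rayleigh_min n A U k u"
    unfolding rayleigh_min_def
  proof (intro conjI allI impI)
    show "unit_orth n U k u" using u S_iff by blast
    fix f assume "unit_orth n U k f"
    then have "fquad n A u \<le> fquad n A (ftrunc n f)" using min trunc_in_S by blast
    then show "fquad n A u \<le> fquad n A f" by (simp add: fquad_def)
  qed
  then show ?thesis by blast
qed

lemma rayleigh_min_homogeneous:
  assumes min: "rayleigh_min n A U k u"
    and z: "\<forall>m<k. fdot n z (U m) = 0"
  shows "fquad n A u * fdot n z z \<le> fquad n A z"
proof (cases "fdot n z z = 0")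
  case True
  then show ?thesis by (simp add: fquad_def fdot_eq_0_if_self_eq_0)
next
  case False
  define c where "c = 1 / sqrt (fdot n z z)"
  note c = fdot_rescale_unit[OF False, folded c_def]
  have "unit_orth n U k (\<lambda>i. c * z i)"
    unfolding c_def using unit_orth_rescale[OF False z] .
  then have "fquad n A u \<le> fquad n A (\<lambda>i. c * z i)" using min unfolding rayleigh_min_def by blast
  also have "\<dots> = c * c * fquad n A z" by (simp add: fquad_def fapp_scale fdot_scale_left fdot_scale_right)
  finally show ?thesis using c(1) False fdot_self_nonneg[of n z] by (simp add: field_simps)
qed

lemma linear_coeff_zero_if_quadratic_nonneg:
  fixes p b :: real
  assumes "\<And>t. 0 \<le> 2 * t * p + t\<^sup>2 * b"
  shows "p = 0"
proof (rule ccontr)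
  assume p: "p \<noteq> 0"
  define c where "c = \<bar>b\<bar> + 1"
  have c: "c > 0" "b \<le> c" unfolding c_def by auto
  define t where "t = - p / c"
  have "t\<^sup>2 * b \<le> t\<^sup>2 * c" using c by (intro mult_left_mono) auto
  moreover have "2 * t * p + t\<^sup>2 * c = - (p\<^sup>2 / c)"
    unfolding t_def using c by (simp add: power2_eq_square field_simps)
  moreover have "p\<^sup>2 / c > 0" using p c by auto
  ultimately have "2 * t * p + t\<^sup>2 * b < 0" by linarith
  with assms show False by (meson not_le)
qed

lemma rayleigh_min_stationary:
  assumes A: "A \<in> carrier_mat n n" and sym: "transpose_mat A = A" and min: "rayleigh_min n A U k u"
    and w: "\<forall>m<k. fdot n w (U m) = 0" and uw: "fdot n u w = 0"
  shows "fdot n u (fapp n A w) = 0"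
proof (rule linear_coeff_zero_if_quadratic_nonneg)
  fix t
  define z where "z = (\<lambda>i. 1 * u i + t * w i)"
  have u: "fdot n u u = 1" "\<forall>m<k. fdot n u (U m) = 0"
    using min by (simp_all add: rayleigh_min_def unit_orth_def)
  have "\<forall>m<k. fdot n z (U m) = 0" unfolding z_def fdot_lincomb_left using u w by simp
  then have "fquad n A u * fdot n z z \<le> fquad n A z" by (rule rayleigh_min_homogeneous[OF min])
  moreover have "fdot n z z = 1 + t\<^sup>2 * fdot n w w"
    unfolding z_def fdot_lincomb_left fdot_lincomb_right using u uw
    by (simp add: fdot_commute[of n w u] power2_eq_square)
  moreover have "fquad n A z = fquad n A u + 2 * t * fdot n u (fapp n A w) + t\<^sup>2 * fquad n A w"
    unfolding z_def fquad_def fapp_lincomb fdot_lincomb_left fdot_lincomb_right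
    using fdot_fapp_symmetric[OF A sym, of w u] fdot_commute[of n "fapp n A w" u]
    by (simp add: power2_eq_square algebra_simps)
  ultimately show "0 \<le> 2 * t * fdot n u (fapp n A w) + t\<^sup>2 * (fquad n A w - fquad n A u * fdot n w w)"
    by (simp add: algebra_simps)
qed

lemma rayleigh_min_eigenvector:
  assumes A: "A \<in> carrier_mat n n" and sym: "transpose_mat A = A"
    and eig: "\<forall>m<k. \<forall>i<n. fapp n A (U m) i = d m * U m i" and min: "rayleigh_min n A U k u"
    and "i < n"
  shows "fapp n A u i = fquad n A u * u i"
proof -
  have u1: "fdot n u u = 1" and uU: "\<forall>m<k. fdot n u (U m) = 0"
    using min by (auto simp: rayleigh_min_def unit_orth_def)
  define w where "w = (\<lambda>i. 1 * fapp n A u i + (- fquad n A u) * u i)"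
  have "\<forall>m<k. fdot n w (U m) = 0"
  proof (intro allI impI)
    fix m assume "m < k"
    have "fdot n (fapp n A u) (U m) = fdot n u (\<lambda>i. d m * U m i)"
      using eig \<open>m < k\<close> by (simp add: fdot_fapp_symmetric[OF A sym, symmetric] cong: fdot_cong_right)
    then show "fdot n w (U m) = 0"
      unfolding w_def fdot_lincomb_left using uU \<open>m < k\<close> by (simp add: fdot_scale_right)
  qed
  moreover have uw: "fdot n u w = 0" unfolding w_def fdot_lincomb_right by (simp add: u1 fquad_def)
  ultimately have "fdot n u (fapp n A w) = 0" by (intro rayleigh_min_stationary[OF A sym min])
  then have "fdot n (fapp n A u) w = 0" by (simp add: fdot_fapp_symmetric[OF A sym])
  moreover have "fdot n w w = fdot n (fapp n A u) w - fquad n A u * fdot n u w"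
    unfolding w_def fdot_lincomb_left by simp
  ultimately have "fdot n w w = 0" using uw by simp
  then show ?thesis using fdot_self_eq_0D[of n w] \<open>i < n\<close> unfolding w_def by simp
qed

lemma unit_orth_exists:
  assumes "k < n" and orth: "orthonormal_fam n U k"
  shows "\<exists>f. unit_orth n U k f"
proof -
  \<comment> \<open>the projections of the standard basis vectors onto the complement of the \<open>U m\<close>\<close>
  define w where "w j = (\<lambda>l. (if l = j then 1 else 0) - (\<Sum>m<k. U m j * U m l))" for j
  have w_U: "fdot n (w j) (U m') = 0" if "j < n" "m' < k" for j m'
  proof -
    have "fdot n (w j) (U m') = fdot n (\<lambda>l. if l = j then 1 else 0) (U m')
        - (\<Sum>i<n. \<Sum>m<k. U m j * U m i * U m' i)"
      unfolding w_def fdot_def by (simp add: left_diff_distrib sum_subtractf sum_distrib_right)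
    also have "(\<Sum>i<n. \<Sum>m<k. U m j * U m i * U m' i) = (\<Sum>m<k. U m j * fdot n (U m) (U m'))"
      unfolding fdot_def by (subst sum.swap) (simp add: sum_distrib_left mult.assoc)
    finally have "fdot n (w j) (U m') = U m' j - (\<Sum>m<k. U m j * fdot n (U m) (U m'))"
      using fdot_indicator_left[OF \<open>j < n\<close>] by simp
    also have "(\<Sum>m<k. U m j * fdot n (U m) (U m')) = (\<Sum>m<k. if m = m' then U m j else 0)"
      using orth that by (intro sum.cong) (auto simp: orthonormal_fam_def)
    finally show ?thesis using that by simp
  qed
  have "\<exists>j<n. fdot n (w j) (w j) \<noteq> 0"
  proof (rule ccontr)
    assume "\<not> ?thesis"
    then have "\<forall>j<n. w j j = 0" using fdot_self_eq_0D by blast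
    then have "\<forall>j<n. (\<Sum>m<k. (U m j)\<^sup>2) = 1" unfolding w_def by (simp add: power2_eq_square)
    then have "(\<Sum>j<n. \<Sum>m<k. (U m j)\<^sup>2) = (\<Sum>j<n. 1::real)" by simp
    moreover have "(\<Sum>j<n. \<Sum>m<k. (U m j)\<^sup>2) = (\<Sum>m<k. fdot n (U m) (U m))"
      unfolding fdot_def by (subst sum.swap) (simp add: power2_eq_square)
    moreover have "(\<Sum>m<k. fdot n (U m) (U m)) = real k" using orth by (simp add: orthonormal_fam_def)
    ultimately show False using \<open>k < n\<close> by simp
  qed
  then obtain j where "j < n" and nz: "fdot n (w j) (w j) \<noteq> 0" by blast
  then show ?thesis using unit_orth_rescale[OF nz] w_U by blast
qed

lemma orthonormal_eigenvectors_exist: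
  assumes A: "A \<in> carrier_mat n n" and sym: "transpose_mat A = A" and "k \<le> n"
  shows "\<exists>U d. orthonormal_fam n U k \<and> (\<forall>m<k. \<forall>i<n. fapp n A (U m) i = d m * U m i)"
  using \<open>k \<le> n\<close>
proof (induction k)
  case 0
  then show ?case by (simp add: orthonormal_fam_def)
next
  case (Suc k)
  then obtain U d where orth: "orthonormal_fam n U k"
    and eig: "\<forall>m<k. \<forall>i<n. fapp n A (U m) i = d m * U m i" by auto
  have "\<exists>f. unit_orth n U k f" using unit_orth_exists[OF _ orth] Suc.prems by simp
  then obtain u where min: "rayleigh_min n A U k u" using rayleigh_min_exists[of n U k A] by blast
  then have u: "unit_orth n U k u" unfolding rayleigh_min_def by blast
  show ?case
  proof (intro exI conjI)
    show "orthonormal_fam n (U(k := u)) (Suc k)"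
      unfolding orthonormal_fam_def
    proof (intro allI impI)
      have uU: "fdot n u (U j) = 0" "fdot n (U j) u = 0" if "j < k" for j
        using u that fdot_commute[of n u "U j"] unfolding unit_orth_def by auto
      fix m m' assume "m < Suc k" "m' < Suc k"
      then consider "m = k" "m' = k" | "m = k" "m' < k" | "m < k" "m' = k" | "m < k" "m' < k"
        by linarith
      then show "fdot n ((U(k := u)) m) ((U(k := u)) m') = (if m = m' then 1 else 0)"
        by cases (use u uU orth in \<open>simp_all add: unit_orth_def orthonormal_fam_def\<close>)
    qed
    show "\<forall>m<Suc k. \<forall>i<n. fapp n A ((U(k := u)) m) i = (d(k := fquad n A u)) m * (U(k := u)) m i"
      using eig rayleigh_min_eigenvector[OF A sym eig min] by (simp add: less_Suc_eq)
  qed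
qed

theorem symmetric_mat_orthogonal_diagonalization:
  fixes A :: "real mat"
  assumes A: "A \<in> carrier_mat n n" and sym: "transpose_mat A = A"
  obtains W d where "W \<in> carrier_mat n n" "W * transpose_mat W = 1\<^sub>m n"
    "transpose_mat W * W = 1\<^sub>m n" "A = W * mat_diag n d * transpose_mat W"
proof -
  obtain U d where orth: "orthonormal_fam n U n"
    and eig: "\<forall>m<n. \<forall>i<n. fapp n A (U m) i = d m * U m i"
    using orthonormal_eigenvectors_exist[OF A sym] by blast
  define W where "W = mat n n (\<lambda>(i,j). U j i)"
  have W: "W \<in> carrier_mat n n" and Wt: "transpose_mat W \<in> carrier_mat n n" unfolding W_def by auto
  have WtW: "transpose_mat W * W = 1\<^sub>m n"
  proof (rule eq_matI)
    fix i j assume ij: "i < dim_row (1\<^sub>m n)" "j < dim_col (1\<^sub>m n)"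
    then have "(transpose_mat W * W) $$ (i,j) = fdot n (U i) (U j)"
      unfolding W_def fdot_def by (auto simp: scalar_prod_def intro!: sum.cong)
    then show "(transpose_mat W * W) $$ (i,j) = 1\<^sub>m n $$ (i,j)"
      using orth ij by (auto simp: orthonormal_fam_def)
  qed (use W in auto)
  have WWt: "W * transpose_mat W = 1\<^sub>m n" by (rule mat_mult_left_right_inverse[OF Wt W WtW])
  have AW: "A * W = W * mat_diag n d"
  proof (rule eq_matI)
    fix i j assume "i < dim_row (W * mat_diag n d)" "j < dim_col (W * mat_diag n d)"
    then have ij: "i < n" "j < n" using W by (auto simp: mat_diag_def)
    have "(A * W) $$ (i,j) = fapp n A (U j) i"
      using A ij unfolding W_def fapp_def by (auto simp: scalar_prod_def intro!: sum.cong)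
    then show "(A * W) $$ (i,j) = (W * mat_diag n d) $$ (i,j)"
      using eig ij mat_diag_mult_right[OF W, of d] by (simp add: W_def mult.commute)
  qed (use A W in \<open>auto simp: mat_diag_def\<close>)
  have "A = (A * W) * transpose_mat W" using A W Wt WWt by (simp add: assoc_mult_mat[of _ n n _ n _ n])
  then have "A = W * mat_diag n d * transpose_mat W" unfolding AW .
  with W WWt WtW show thesis by (rule that)
qed

section \<open>Symmetric matrices with exactly one negative eigenvalue\<close>

lemma order_prod_list_linear:
  fixes d :: "nat \<Rightarrow> real"
  shows "Polynomial.order k (\<Prod>j\<leftarrow>[0..<m]. [:-d j, 1:]) = card {j. j < m \<and> d j = k}"
proof (induction m)
  case 0
  then show ?case by (simp add: order_0I)
next
  case (Suc m)
  have "(\<Prod>j\<leftarrow>[0..<m]. [:-d j, 1:]) \<noteq> 0" by (auto simp: prod_list_zero_iff)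
  then have "(\<Prod>j\<leftarrow>[0..<m]. [:-d j, 1:]) * [:-d m, 1:] \<noteq> 0" by (rule no_zero_divisors) simp
  note order_mult[OF this, of k]
  moreover have "{j. j < Suc m \<and> d j = k} = {j. j < m \<and> d j = k} \<union> (if d m = k then {m} else {})"
    by (auto simp: less_Suc_eq)
  then have "card {j. j < Suc m \<and> d j = k} = card {j. j < m \<and> d j = k} + (if d m = k then 1 else 0)"
    by auto
  ultimately show ?case using Suc.IH by (simp add: order_linear')
qed

lemma
  fixes d :: "nat \<Rightarrow> real"
  assumes W: "W \<in> carrier_mat n n" and WWt: "W * transpose_mat W = 1\<^sub>m n"
    and WtW: "transpose_mat W * W = 1\<^sub>m n"
  shows char_poly_orthogonal_conj_diag:
      "char_poly (W * mat_diag n d * transpose_mat W) = (\<Prod>j\<leftarrow>[0..<n]. [:-d j, 1:])"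
    and det_orthogonal_conj_diag: "det (W * mat_diag n d * transpose_mat W) = (\<Prod>j<n. d j)"
proof -
  have "similar_mat_wit (W * mat_diag n d * transpose_mat W) (mat_diag n d) W (transpose_mat W)"
    by (rule similar_mat_witI[OF WWt WtW refl]) (use W in auto)
  then have sim: "similar_mat (W * mat_diag n d * transpose_mat W) (mat_diag n d)"
    unfolding similar_mat_def by blast
  have ut: "upper_triangular (mat_diag n d)" by (simp add: upper_triangular_def mat_diag_def)
  have diag: "diag_mat (mat_diag n d) = map d [0..<n]" by (auto simp: diag_mat_def mat_diag_def)
  show "char_poly (W * mat_diag n d * transpose_mat W) = (\<Prod>j\<leftarrow>[0..<n]. [:-d j, 1:])"
    unfolding char_poly_similar[OF sim] char_poly_upper_triangular[OF mat_diag_dim ut] diag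
    by (simp add: comp_def)
  show "det (W * mat_diag n d * transpose_mat W) = (\<Prod>j<n. d j)"
    unfolding det_similar[OF sim] det_upper_triangular[OF ut mat_diag_dim] diag
    by (simp add: prod.distinct_set_conv_list[symmetric] atLeast0LessThan)
qed

lemma mat_diag_mult_vec:
  assumes "v \<in> carrier_vec n"
  shows "mat_diag n d *\<^sub>v v = vec n (\<lambda>i. d i * v $ i)"
proof (rule eq_vecI)
  fix i assume "i < dim_vec (vec n (\<lambda>i. d i * v $ i))"
  then have "i < n" by simp
  have "(mat_diag n d *\<^sub>v v) $ i = (\<Sum>l = 0..<n. (if i = l then d l else 0) * v $ l)"
    using assms \<open>i < n\<close> by (auto simp: mat_diag_def scalar_prod_def)
  also have "\<dots> = (\<Sum>l = 0..<n. if l = i then d i * v $ i else 0)" by (rule sum.cong) auto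
  finally show "(mat_diag n d *\<^sub>v v) $ i = vec n (\<lambda>i. d i * v $ i) $ i" using \<open>i < n\<close> by simp
qed (simp add: mat_diag_def)

lemma scalar_prod_orthogonal_conj_diag:
  fixes d :: "nat \<Rightarrow> real"
  assumes W: "W \<in> carrier_mat n n" and z: "z \<in> carrier_vec n"
  shows "z \<bullet> ((W * mat_diag n d * transpose_mat W) *\<^sub>v z)
    = (\<Sum>j<n. d j * ((transpose_mat W *\<^sub>v z) $ j)\<^sup>2)"
proof -
  define y where "y = transpose_mat W *\<^sub>v z"
  have y: "y \<in> carrier_vec n" unfolding y_def using W z by simp
  have Dy: "mat_diag n d *\<^sub>v y = vec n (\<lambda>j. d j * y $ j)"
    by (rule mat_diag_mult_vec[OF y])
  have "(W * mat_diag n d * transpose_mat W) *\<^sub>v z = W *\<^sub>v (mat_diag n d *\<^sub>v y)"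
    unfolding y_def using W z by (simp add: assoc_mult_mat_vec[of _ n n _ n])
  then have "z \<bullet> ((W * mat_diag n d * transpose_mat W) *\<^sub>v z) = y \<bullet> vec n (\<lambda>j. d j * y $ j)"
    using transpose_vec_mult_scalar[OF W, of "vec n (\<lambda>j. d j * y $ j)" z] z
    unfolding Dy by (simp add: y_def)
  also have "\<dots> = (\<Sum>j<n. d j * (y $ j)\<^sup>2)"
    using y by (simp add: scalar_prod_def lessThan_atLeast0 power2_eq_square ac_simps)
  finally show ?thesis unfolding y_def .
qed

text \<open>In other words, the quadratic form of \<open>A\<close> has index at most one.\<close>

definition no_negative_plane :: "real mat \<Rightarrow> nat \<Rightarrow> bool" where
  "no_negative_plane A n \<longleftrightarrow> (\<forall>x\<in>carrier_vec n. \<forall>y\<in>carrier_vec n. \<exists>a b. (a \<noteq> 0 \<or> b \<noteq> 0) \<and>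
     0 \<le> (a \<cdot>\<^sub>v x + b \<cdot>\<^sub>v y) \<bullet> (A *\<^sub>v (a \<cdot>\<^sub>v x + b \<cdot>\<^sub>v y)))"

lemma neg_eig_count_one_diagonalization:
  fixes A :: "real mat"
  assumes A: "A \<in> carrier_mat n n" and sym: "transpose_mat A = A" and det: "det A \<noteq> 0"
    and neg: "neg_eig_count A = 1"
  obtains W d j0 where "W \<in> carrier_mat n n" "W * transpose_mat W = 1\<^sub>m n"
    "transpose_mat W * W = 1\<^sub>m n" "A = W * mat_diag n d * transpose_mat W"
    "j0 < n" "d j0 < 0" "\<And>j. j < n \<Longrightarrow> j \<noteq> j0 \<Longrightarrow> 0 < d j"
proof -
  obtain W d where W: "W \<in> carrier_mat n n" and WWt: "W * transpose_mat W = 1\<^sub>m n"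
    and WtW: "transpose_mat W * W = 1\<^sub>m n" and AD: "A = W * mat_diag n d * transpose_mat W"
    using symmetric_mat_orthogonal_diagonalization[OF A sym] by blast
  note cp = char_poly_orthogonal_conj_diag[OF W WWt WtW, of d, folded AD]
  have eig: "eigenvalue A k \<longleftrightarrow> (\<exists>j<n. d j = k)" for k
    unfolding eigenvalue_root_char_poly[OF A] cp poly_prod_list prod_list_zero_iff by auto
  define J where "J = {j. j < n \<and> d j < 0}"
  have "finite J" unfolding J_def by simp
  have "{k. eigenvalue A k \<and> k < 0} = d ` J" unfolding eig J_def by auto
  then have "1 = (\<Sum>k\<in>d ` J. Polynomial.order k (char_poly A))" using neg by (simp add: neg_eig_count_def)
  also have "\<dots> = (\<Sum>k\<in>d ` J. card {j. j \<in> J \<and> d j = k})"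
    unfolding cp order_prod_list_linear J_def by (intro sum.cong refl arg_cong[where f = card]) auto
  also have "\<dots> = card J"
    using sum.image_gen[OF \<open>finite J\<close>, of "\<lambda>_. 1::nat" d] by simp
  finally obtain j0 where J: "J = {j0}" by (metis card_1_singletonE)
  have nz: "d j \<noteq> 0" if "j < n" for j
    using det that unfolding AD det_orthogonal_conj_diag[OF W WWt WtW] by auto
  show thesis
  proof (rule that[OF W WWt WtW AD])
    show "j0 < n" "d j0 < 0" using J unfolding J_def by auto
    show "0 < d j" if "j < n" "j \<noteq> j0" for j
      using J nz[OF \<open>j < n\<close>] that unfolding J_def by (metis (mono_tags) mem_Collect_eq
          singletonD linorder_neqE_linordered_idom)
  qed
qed

lemma neg_eig_count_one_det_neg:
  fixes A :: "real mat"
  assumes "A \<in> carrier_mat n n" and "transpose_mat A = A" and "det A \<noteq> 0"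
    and "neg_eig_count A = 1"
  shows "det A < 0"
proof -
  obtain W d j0 where W: "W \<in> carrier_mat n n" "W * transpose_mat W = 1\<^sub>m n"
    "transpose_mat W * W = 1\<^sub>m n" and AD: "A = W * mat_diag n d * transpose_mat W"
    and j0: "j0 < n" "d j0 < 0" and pos: "\<And>j. j < n \<Longrightarrow> j \<noteq> j0 \<Longrightarrow> 0 < d j"
    using neg_eig_count_one_diagonalization[OF assms] by blast
  have "det A = d j0 * (\<Prod>j\<in>{..<n} - {j0}. d j)"
    unfolding AD det_orthogonal_conj_diag[OF W] using j0 by (simp add: prod.remove)
  moreover have "0 < (\<Prod>j\<in>{..<n} - {j0}. d j)" using pos by (intro prod_pos) auto
  ultimately show ?thesis using j0 by (simp add: mult_neg_pos)
qed

lemma neg_eig_count_one_no_negative_plane: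
  fixes A :: "real mat"
  assumes "A \<in> carrier_mat n n" and "transpose_mat A = A" and "det A \<noteq> 0"
    and "neg_eig_count A = 1"
  shows "no_negative_plane A n"
  unfolding no_negative_plane_def
proof (intro ballI)
  fix x y :: "real vec" assume x: "x \<in> carrier_vec n" and y: "y \<in> carrier_vec n"
  obtain W d j0 where W: "W \<in> carrier_mat n n" and AD: "A = W * mat_diag n d * transpose_mat W"
    and j0: "j0 < n" and pos: "\<And>j. j < n \<Longrightarrow> j \<noteq> j0 \<Longrightarrow> 0 < d j"
    using neg_eig_count_one_diagonalization[OF assms] by blast
  \<comment> \<open>kill the coordinate of the negative eigenvalue\<close>
  define cx where "cx = (transpose_mat W *\<^sub>v x) $ j0"
  define cy where "cy = (transpose_mat W *\<^sub>v y) $ j0"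
  obtain a b where ab: "a \<noteq> 0 \<or> b \<noteq> 0" and abz: "a * cx + b * cy = 0"
  proof (cases "cy = 0")
    case True
    then show thesis using that[of 0 1] by simp
  next
    case False
    then show thesis using that[of cy "- cx"] by (simp add: algebra_simps)
  qed
  define z where "z = a \<cdot>\<^sub>v x + b \<cdot>\<^sub>v y"
  have z: "z \<in> carrier_vec n" unfolding z_def using x y by simp
  have "transpose_mat W *\<^sub>v z = a \<cdot>\<^sub>v (transpose_mat W *\<^sub>v x) + b \<cdot>\<^sub>v (transpose_mat W *\<^sub>v y)"
    unfolding z_def using W x y by (simp add: mult_add_distrib_mat_vec[of _ n n] mult_mat_vec)
  then have "(transpose_mat W *\<^sub>v z) $ j0 = 0" using abz j0 W x y unfolding cx_def cy_def by simp
  then have nonneg: "0 \<le> d j * ((transpose_mat W *\<^sub>v z) $ j)\<^sup>2" if "j < n" for j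
    using pos[OF that] by (cases "j = j0") auto
  have "0 \<le> z \<bullet> (A *\<^sub>v z)"
    unfolding AD scalar_prod_orthogonal_conj_diag[OF W z] by (intro sum_nonneg) (simp add: nonneg)
  then show "\<exists>a b. (a \<noteq> 0 \<or> b \<noteq> 0) \<and> 0 \<le> (a \<cdot>\<^sub>v x + b \<cdot>\<^sub>v y) \<bullet> (A *\<^sub>v (a \<cdot>\<^sub>v x + b \<cdot>\<^sub>v y))"
    using ab unfolding z_def by blast
qed

section \<open>Skew-symmetric perturbations\<close>

lemma scalar_prod_self_nonneg: "0 \<le> (x :: real vec) \<bullet> x"
  by (simp add: scalar_prod_def sum_nonneg)

lemma scalar_prod_self_eq_0:
  fixes x :: "real vec"
  assumes x: "x \<in> carrier_vec n" and "x \<bullet> x = 0"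
  shows "x = 0\<^sub>v n"
proof (rule eq_vecI)
  have "(\<Sum>i<n. x $ i * x $ i) = 0" using assms by (simp add: scalar_prod_def lessThan_atLeast0)
  then show "x $ i = 0\<^sub>v n $ i" if "i < dim_vec (0\<^sub>v n)" for i
    using that by (subst (asm) sum_nonneg_eq_0_iff) auto
qed (use x in simp)

lemma scalar_prod_Cauchy_Schwarz:
  fixes u v :: "real vec"
  assumes "u \<in> carrier_vec n" and "v \<in> carrier_vec n"
  shows "(u \<bullet> v)\<^sup>2 \<le> (u \<bullet> u) * (v \<bullet> v)"
  using Cauchy_Schwarz_ineq_sum[of "\<lambda>i. u $ i" "\<lambda>i. v $ i" "{0..<n}"] assms
  by (simp add: scalar_prod_def power2_eq_square)

lemma scalar_prod_self_mult_mat_vec_pos: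
  fixes A :: "real mat"
  assumes A: "A \<in> carrier_mat n n" and "det A \<noteq> 0" and x: "x \<in> carrier_vec n" "x \<noteq> 0\<^sub>v n"
  shows "0 < (A *\<^sub>v x) \<bullet> (A *\<^sub>v x)"
proof -
  have "A *\<^sub>v x \<noteq> 0\<^sub>v n" using det_0_iff_vec_prod_zero[OF A] assms by blast
  then have "(A *\<^sub>v x) \<bullet> (A *\<^sub>v x) \<noteq> 0" using scalar_prod_self_eq_0[of "A *\<^sub>v x" n] A x by auto
  then show ?thesis using scalar_prod_self_nonneg[of "A *\<^sub>v x"] by linarith
qed

lemma symmetric_scalar_prod:
  fixes A :: "'a :: comm_semiring_0 mat"
  assumes A: "A \<in> carrier_mat n n" and sym: "transpose_mat A = A"
    and x: "x \<in> carrier_vec n" and y: "y \<in> carrier_vec n"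
  shows "y \<bullet> (A *\<^sub>v x) = x \<bullet> (A *\<^sub>v y)"
  using transpose_vec_mult_scalar[OF A x y] A x y by (simp add: sym comm_scalar_prod[of _ n])

lemma skew_scalar_prod:
  fixes C :: "'a :: comm_ring mat"
  assumes C: "C \<in> carrier_mat n n" and skew: "transpose_mat C = - C"
    and x: "x \<in> carrier_vec n" and y: "y \<in> carrier_vec n"
  shows "y \<bullet> (C *\<^sub>v x) = - (x \<bullet> (C *\<^sub>v y))"
proof -
  have "y \<bullet> (C *\<^sub>v x) = (- C *\<^sub>v y) \<bullet> x" using transpose_vec_mult_scalar[OF C x y] by (simp add: skew)
  also have "\<dots> = - ((C *\<^sub>v y) \<bullet> x)"
    using C x y by (simp add: scalar_prod_def mult_mat_vec_def sum_negf)
  finally show ?thesis using C x y by (simp add: comm_scalar_prod[of _ n])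
qed

lemma skew_sum_scalar_prod:
  fixes A B :: "real mat"
  assumes A: "A \<in> carrier_mat n n" and B: "B \<in> carrier_mat n n" and sym: "transpose_mat A = A"
    and skew: "transpose_mat (A * B) = - (A * B)"
    and x: "x \<in> carrier_vec n" and y: "y \<in> carrier_vec n"
  shows "x \<bullet> (A *\<^sub>v ((A + B) *\<^sub>v y)) + y \<bullet> (A *\<^sub>v ((A + B) *\<^sub>v x)) = 2 * ((A *\<^sub>v x) \<bullet> (A *\<^sub>v y))"
proof -
  have split: "u \<bullet> (A *\<^sub>v ((A + B) *\<^sub>v v)) = (A *\<^sub>v u) \<bullet> (A *\<^sub>v v) + u \<bullet> ((A * B) *\<^sub>v v)"
    if u: "u \<in> carrier_vec n" and v: "v \<in> carrier_vec n" for u v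
  proof -
    have "A *\<^sub>v ((A + B) *\<^sub>v v) = A *\<^sub>v (A *\<^sub>v v) + (A * B) *\<^sub>v v"
      using A B v by (simp add: add_mult_distrib_mat_vec mult_add_distrib_mat_vec)
    moreover have "u \<bullet> (A *\<^sub>v (A *\<^sub>v v)) = (A *\<^sub>v u) \<bullet> (A *\<^sub>v v)"
      using transpose_vec_mult_scalar[OF A, of "A *\<^sub>v v" u] A u v by (simp add: sym)
    ultimately show ?thesis using A B u v by (simp add: scalar_prod_add_distrib[of _ n])
  qed
  have "y \<bullet> ((A * B) *\<^sub>v x) = - (x \<bullet> ((A * B) *\<^sub>v y))"
    using A B x y by (intro skew_scalar_prod[OF _ skew]) auto
  then show ?thesis using split[OF x y] split[OF y x] A x y by (simp add: comm_scalar_prod[of _ n])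
qed

lemma skew_sum_eigenvectors:
  fixes A B :: "real mat"
  assumes A: "A \<in> carrier_mat n n" and B: "B \<in> carrier_mat n n" and sym: "transpose_mat A = A"
    and skew: "transpose_mat (A * B) = - (A * B)"
    and x: "x \<in> carrier_vec n" "(A + B) *\<^sub>v x = l \<cdot>\<^sub>v x"
    and y: "y \<in> carrier_vec n" "(A + B) *\<^sub>v y = m \<cdot>\<^sub>v y"
  shows "(l + m) * (x \<bullet> (A *\<^sub>v y)) = 2 * ((A *\<^sub>v x) \<bullet> (A *\<^sub>v y))"
proof -
  have "y \<bullet> (A *\<^sub>v x) = x \<bullet> (A *\<^sub>v y)" by (rule symmetric_scalar_prod[OF A sym x(1) y(1)])
  then show ?thesis
    using skew_sum_scalar_prod[OF A B sym skew x(1) y(1)] A x y by (simp add: mult_mat_vec algebra_simps)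
qed

lemma skew_sum_eigenvector_quad:
  fixes A B :: "real mat"
  assumes "A \<in> carrier_mat n n" and "B \<in> carrier_mat n n" and "transpose_mat A = A"
    and "transpose_mat (A * B) = - (A * B)"
    and "x \<in> carrier_vec n" and "(A + B) *\<^sub>v x = l \<cdot>\<^sub>v x"
  shows "l * (x \<bullet> (A *\<^sub>v x)) = (A *\<^sub>v x) \<bullet> (A *\<^sub>v x)"
  using skew_sum_eigenvectors[OF assms assms(5,6)] by simp

lemma skew_sum_det_nonzero:
  fixes A B :: "real mat"
  assumes A: "A \<in> carrier_mat n n" and B: "B \<in> carrier_mat n n" and sym: "transpose_mat A = A"
    and det: "det A \<noteq> 0" and skew: "transpose_mat (A * B) = - (A * B)"
  shows "det (A + B) \<noteq> 0"
proof
  assume "det (A + B) = 0"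
  then obtain x where x: "x \<in> carrier_vec n" "x \<noteq> 0\<^sub>v n" and "(A + B) *\<^sub>v x = 0\<^sub>v n"
    using det_0_iff_vec_prod_zero[of "A + B" n] A B by auto
  moreover have "0 \<cdot>\<^sub>v x = 0\<^sub>v n" using x(1) by (intro eq_vecI) auto
  ultimately have "(A + B) *\<^sub>v x = 0 \<cdot>\<^sub>v x" by simp
  from skew_sum_eigenvector_quad[OF A B sym skew x(1) this]
  have "(A *\<^sub>v x) \<bullet> (A *\<^sub>v x) = 0" by simp
  then show False using scalar_prod_self_mult_mat_vec_pos[OF A det x] by simp
qed

lemma skew_sum_neg_eigenvector_quad_neg:
  fixes A B :: "real mat"
  assumes A: "A \<in> carrier_mat n n" and B: "B \<in> carrier_mat n n" and sym: "transpose_mat A = A"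
    and det: "det A \<noteq> 0" and skew: "transpose_mat (A * B) = - (A * B)"
    and z: "z \<in> carrier_vec n" "z \<noteq> 0\<^sub>v n" "(A + B) *\<^sub>v z = l \<cdot>\<^sub>v z" and "l < 0"
  shows "z \<bullet> (A *\<^sub>v z) < 0"
proof -
  have "0 < l * (z \<bullet> (A *\<^sub>v z))"
    using skew_sum_eigenvector_quad[OF A B sym skew z(1,3)] scalar_prod_self_mult_mat_vec_pos[OF A det z(1,2)]
    by simp
  with \<open>l < 0\<close> show ?thesis by (simp add: zero_less_mult_iff)
qed

lemma invertible_mat_if_det_nonzero:
  fixes M :: "'a :: field mat"
  assumes M: "M \<in> carrier_mat n n" and "det M \<noteq> 0"
  shows "invertible_mat M"
proof -
  obtain N where "N \<in> carrier_mat n n" "N * M = 1\<^sub>m n" "M * N = 1\<^sub>m n"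
    using det_non_zero_imp_unit[OF assms] unfolding Units_def ring_mat_def by auto
  then show ?thesis using M unfolding invertible_mat_def inverts_mat_def by auto
qed

lemma continuous_on_det_affine:
  "continuous_on UNIV (\<lambda>t::real. det (mat n n (\<lambda>ij. a ij + t * b ij)))"
proof -
  have "det (mat n n (\<lambda>ij. a ij + t * b ij)) =
    (\<Sum>p\<in>{p. p permutes {0..<n}}. signof p * (\<Prod>i = 0..<n. a (i, p i) + t * b (i, p i)))" for t
    unfolding det_def'[OF mat_carrier]
    by (intro sum.cong refl arg_cong2[where f = "(*)"] prod.cong) (auto simp: permutes_in_image)
  then show ?thesis by (simp only:) (intro continuous_intros)
qed

lemma skew_sum_det_same_sign:
  fixes A B :: "real mat"
  assumes A: "A \<in> carrier_mat n n" and B: "B \<in> carrier_mat n n" and sym: "transpose_mat A = A"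
    and det: "det A \<noteq> 0" and skew: "transpose_mat (A * B) = - (A * B)"
  shows "0 < det A * det (A + B)"
proof (rule ccontr)
  define f where "f t = det A * det (mat n n (\<lambda>ij. A $$ ij + t * B $$ ij))" for t :: real
  have path: "mat n n (\<lambda>ij. A $$ ij + t * B $$ ij) = A + t \<cdot>\<^sub>m B" for t
    by (rule eq_matI) (use A B in auto)
  have "transpose_mat (A * (t \<cdot>\<^sub>m B)) = - (A * (t \<cdot>\<^sub>m B))" for t
  proof -
    have "transpose_mat (t \<cdot>\<^sub>m (A * B)) = t \<cdot>\<^sub>m transpose_mat (A * B)" by (rule eq_matI) auto
    also have "\<dots> = - (t \<cdot>\<^sub>m (A * B))" unfolding skew by (rule eq_matI) auto
    finally show ?thesis by (simp add: mult_smult_distrib[OF A B])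
  qed
  then have nz: "f t \<noteq> 0" for t
    unfolding f_def path using skew_sum_det_nonzero[OF A _ sym det] B det by simp
  have "continuous_on {0..1} f" unfolding f_def
    by (intro continuous_intros continuous_on_subset[OF continuous_on_det_affine]) auto
  moreover have "mat n n (\<lambda>ij. A $$ ij + 0 * B $$ ij) = A" by (rule eq_matI) (use A in auto)
  then have "f 0 = det A * det A" unfolding f_def by simp
  moreover have "mat n n (\<lambda>ij. A $$ ij + 1 * B $$ ij) = A + B" by (rule eq_matI) (use A B in auto)
  then have "f 1 = det A * det (A + B)" unfolding f_def by simp
  moreover assume "\<not> 0 < det A * det (A + B)"
  ultimately obtain t where "0 \<le> t" "t \<le> 1" "f t = 0"
    using IVT2'[of f 1 0 0] det by (auto simp: not_less)
  with nz show False by blast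
qed

lemma det_neg_imp_neg_eigenvalue:
  fixes M :: "real mat"
  assumes M: "M \<in> carrier_mat n n" and neg: "det M < 0"
  obtains k where "k < 0" "eigenvalue M k"
proof -
  define g where "g s = det (mat n n (\<lambda>ij. 1\<^sub>m n $$ ij + s * (M $$ ij - 1\<^sub>m n $$ ij)))" for s :: real
  have "continuous_on {0..1} g" unfolding g_def
    by (intro continuous_on_subset[OF continuous_on_det_affine]) auto
  moreover have "mat n n (\<lambda>ij. 1\<^sub>m n $$ ij + 0 * (M $$ ij - 1\<^sub>m n $$ ij)) = 1\<^sub>m n"
    by (rule eq_matI) auto
  then have "g 0 = 1" unfolding g_def by simp
  moreover have "mat n n (\<lambda>ij. 1\<^sub>m n $$ ij + 1 * (M $$ ij - 1\<^sub>m n $$ ij)) = M"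
    by (rule eq_matI) (use M in auto)
  then have "g 1 = det M" unfolding g_def by simp
  ultimately obtain s where s: "0 \<le> s" "s \<le> 1" "g s = 0"
    using IVT2'[of g 1 0 0] neg by auto
  then have "s \<noteq> 0" "s \<noteq> 1" using \<open>g 0 = 1\<close> \<open>g 1 = det M\<close> neg by auto
  with s have s: "0 < s" "s < 1" "g s = 0" by auto
  \<comment> \<open>\<open>(1 - s) I + s M = s (M - k I)\<close>\<close>
  define k where "k = (s - 1) / s"
  have "k < 0" unfolding k_def using s by (simp add: divide_neg_pos)
  have "mat n n (\<lambda>ij. 1\<^sub>m n $$ ij + s * (M $$ ij - 1\<^sub>m n $$ ij)) = s \<cdot>\<^sub>m char_matrix M k"
    by (rule eq_matI) (use M s in \<open>auto simp: char_matrix_def k_def field_simps\<close>)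
  then have "s ^ n * det (char_matrix M k) = 0"
    using s(3) M unfolding g_def by (simp add: char_matrix_def)
  then have "eigenvalue M k" using eigenvalue_det[OF M] s by simp
  with \<open>k < 0\<close> show thesis by (rule that)
qed

section \<open>The negative eigenvalue of \<open>A + B\<close>\<close>

lemma neg_def_binary_form:
  fixes a b c s t :: real
  assumes a: "a < 0" and disc: "c\<^sup>2 < a * b" and st: "s \<noteq> 0 \<or> t \<noteq> 0"
  shows "s\<^sup>2 * a + 2 * s * t * c + t\<^sup>2 * b < 0"
proof (cases "t = 0")
  case True
  with st a show ?thesis by (simp add: mult_pos_neg)
next
  case False
  have "a * (s\<^sup>2 * a + 2 * s * t * c + t\<^sup>2 * b) = (a * s + c * t)\<^sup>2 + (a * b - c\<^sup>2) * t\<^sup>2"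
    by (simp add: power2_eq_square algebra_simps)
  also have "\<dots> > 0" using disc False by (intro add_nonneg_pos) auto
  finally show ?thesis using a by (simp add: zero_less_mult_iff)
qed

lemma square_lt_of_distinct_neg:
  fixes a b c l m :: real
  assumes "l < 0" "m < 0" "l \<noteq> m" "0 < a * b" and "(l + m)\<^sup>2 * c\<^sup>2 \<le> 4 * l * m * (a * b)"
  shows "c\<^sup>2 < a * b"
proof (rule ccontr)
  assume "\<not> c\<^sup>2 < a * b"
  then have ab: "a * b \<le> c\<^sup>2" and "0 < c\<^sup>2" using assms(4) by linarith+
  have "0 < 4 * l * m" using assms(1,2) by (simp add: mult_neg_neg)
  then have "4 * l * m * (a * b) \<le> 4 * l * m * c\<^sup>2" using ab by (intro mult_left_mono) auto
  also have "\<dots> < (l + m)\<^sup>2 * c\<^sup>2"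
  proof -
    have "(l + m)\<^sup>2 - 4 * l * m = (l - m)\<^sup>2" by (simp add: power2_eq_square algebra_simps)
    moreover have "0 < (l - m)\<^sup>2" using assms(3) by simp
    ultimately have "4 * l * m < (l + m)\<^sup>2" by linarith
    then show ?thesis using \<open>0 < c\<^sup>2\<close> by simp
  qed
  finally show False using assms(5) by simp
qed

lemma scalar_prod_lincomb_quad:
  fixes A :: "real mat"
  assumes A: "A \<in> carrier_mat n n" and sym: "transpose_mat A = A"
    and x: "x \<in> carrier_vec n" and y: "y \<in> carrier_vec n"
  shows "(s \<cdot>\<^sub>v x + t \<cdot>\<^sub>v y) \<bullet> (A *\<^sub>v (s \<cdot>\<^sub>v x + t \<cdot>\<^sub>v y))
    = s\<^sup>2 * (x \<bullet> (A *\<^sub>v x)) + 2 * s * t * (x \<bullet> (A *\<^sub>v y)) + t\<^sup>2 * (y \<bullet> (A *\<^sub>v y))"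
proof -
  have Ax: "A *\<^sub>v x \<in> carrier_vec n" and Ay: "A *\<^sub>v y \<in> carrier_vec n" using A x y by auto
  have "A *\<^sub>v (s \<cdot>\<^sub>v x + t \<cdot>\<^sub>v y) = s \<cdot>\<^sub>v (A *\<^sub>v x) + t \<cdot>\<^sub>v (A *\<^sub>v y)"
    using x y by (simp add: mult_add_distrib_mat_vec[OF A] mult_mat_vec[OF A])
  then have "(s \<cdot>\<^sub>v x + t \<cdot>\<^sub>v y) \<bullet> (A *\<^sub>v (s \<cdot>\<^sub>v x + t \<cdot>\<^sub>v y))
      = s * (x \<bullet> (s \<cdot>\<^sub>v (A *\<^sub>v x) + t \<cdot>\<^sub>v (A *\<^sub>v y))) + t * (y \<bullet> (s \<cdot>\<^sub>v (A *\<^sub>v x) + t \<cdot>\<^sub>v (A *\<^sub>v y)))"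
    using x y Ax Ay by (simp add: add_scalar_prod_distrib[of _ n])
  also have "\<dots> = s * (s * (x \<bullet> (A *\<^sub>v x)) + t * (x \<bullet> (A *\<^sub>v y)))
      + t * (s * (y \<bullet> (A *\<^sub>v x)) + t * (y \<bullet> (A *\<^sub>v y)))"
    using x y Ax Ay by (simp add: scalar_prod_add_distrib[of _ n])
  finally show ?thesis
    unfolding symmetric_scalar_prod[OF A sym x y] by (simp add: power2_eq_square algebra_simps)
qed

lemma skew_sum_neg_eigenvalue_unique:
  fixes A B :: "real mat"
  assumes A: "A \<in> carrier_mat n n" and B: "B \<in> carrier_mat n n" and sym: "transpose_mat A = A"
    and det: "det A \<noteq> 0" and skew: "transpose_mat (A * B) = - (A * B)"
    and plane: "no_negative_plane A n"
    and l: "eigenvalue (A + B) l" "l < 0" and m: "eigenvalue (A + B) m" "m < 0"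
  shows "l = m"
proof (rule ccontr)
  assume "l \<noteq> m"
  have M: "A + B \<in> carrier_mat n n" using A B by simp
  obtain x where x: "x \<in> carrier_vec n" "x \<noteq> 0\<^sub>v n" "(A + B) *\<^sub>v x = l \<cdot>\<^sub>v x"
    using l(1) M unfolding eigenvalue_def eigenvector_def by auto
  obtain y where y: "y \<in> carrier_vec n" "y \<noteq> 0\<^sub>v n" "(A + B) *\<^sub>v y = m \<cdot>\<^sub>v y"
    using m(1) M unfolding eigenvalue_def eigenvector_def by auto
  define a b c where "a = x \<bullet> (A *\<^sub>v x)" and "b = y \<bullet> (A *\<^sub>v y)" and "c = x \<bullet> (A *\<^sub>v y)"
  have "a < 0" unfolding a_def by (rule skew_sum_neg_eigenvector_quad_neg[OF A B sym det skew x l(2)])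
  have "b < 0" unfolding b_def by (rule skew_sum_neg_eigenvector_quad_neg[OF A B sym det skew y m(2)])
  define p where "p = (A *\<^sub>v x) \<bullet> (A *\<^sub>v y)"
  have la: "l * a = (A *\<^sub>v x) \<bullet> (A *\<^sub>v x)"
    unfolding a_def by (rule skew_sum_eigenvector_quad[OF A B sym skew x(1,3)])
  have mb: "m * b = (A *\<^sub>v y) \<bullet> (A *\<^sub>v y)"
    unfolding b_def by (rule skew_sum_eigenvector_quad[OF A B sym skew y(1,3)])
  have lmc: "(l + m) * c = 2 * p"
    unfolding c_def p_def by (rule skew_sum_eigenvectors[OF A B sym skew x(1,3) y(1,3)])
  have "(l + m)\<^sup>2 * c\<^sup>2 = 4 * p\<^sup>2"
    using arg_cong[OF lmc, of "\<lambda>r. r\<^sup>2"] by (simp add: power_mult_distrib)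
  also have "\<dots> \<le> 4 * (l * a) * (m * b)"
    unfolding la mb p_def using scalar_prod_Cauchy_Schwarz[of "A *\<^sub>v x" n "A *\<^sub>v y"] A x y by simp
  finally have "(l + m)\<^sup>2 * c\<^sup>2 \<le> 4 * l * m * (a * b)" by (simp add: ac_simps)
  then have "c\<^sup>2 < a * b"
    using \<open>l \<noteq> m\<close> l(2) m(2) \<open>a < 0\<close> \<open>b < 0\<close> by (intro square_lt_of_distinct_neg) (auto intro: mult_neg_neg)
  obtain s t where st: "s \<noteq> 0 \<or> t \<noteq> 0"
    and nonneg: "0 \<le> (s \<cdot>\<^sub>v x + t \<cdot>\<^sub>v y) \<bullet> (A *\<^sub>v (s \<cdot>\<^sub>v x + t \<cdot>\<^sub>v y))"
    using plane x(1) y(1) unfolding no_negative_plane_def by blast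
  have "0 \<le> s\<^sup>2 * a + 2 * s * t * c + t\<^sup>2 * b"
    using nonneg unfolding scalar_prod_lincomb_quad[OF A sym x(1) y(1)] a_def b_def c_def .
  with neg_def_binary_form[OF \<open>a < 0\<close> \<open>c\<^sup>2 < a * b\<close> st] show False by linarith
qed

lemma kernel_dim_eq_1I:
  fixes C :: "'a :: field mat"
  assumes C: "C \<in> carrier_mat n n" and x0: "x0 \<in> mat_kernel C" "x0 \<noteq> 0\<^sub>v n"
    and line: "\<And>v. v \<in> mat_kernel C \<Longrightarrow> \<exists>c. v = c \<cdot>\<^sub>v x0"
  shows "kernel_dim C = 1"
proof -
  interpret K: kernel n n C by unfold_locales (rule C)
  have sub: "{x0} \<subseteq> mat_kernel C" using x0 by simp
  have span: "K.Ker.span {x0} = {K.Ker.lincomb a {x0} | a. a \<in> ({x0} \<rightarrow> UNIV)}"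
    by (rule K.Ker.finite_span[OF _ sub]) simp
  have "K.Ker.span {x0} = mat_kernel C"
  proof
    show "K.Ker.span {x0} \<subseteq> mat_kernel C" using K.Ker.span_is_subset2 sub by auto
    show "mat_kernel C \<subseteq> K.Ker.span {x0}"
    proof
      fix v assume "v \<in> mat_kernel C"
      then obtain c where v: "v = c \<cdot>\<^sub>v x0" using line by blast
      have "K.Ker.lincomb (\<lambda>_. c) {x0} = c \<cdot>\<^sub>v x0" unfolding K.Ker.lincomb_def using x0 by auto
      then have lc: "v = K.Ker.lincomb (\<lambda>_. c) {x0}" using v by simp
      have "(\<lambda>_. c) \<in> ({x0} \<rightarrow> UNIV)" by simp
      then show "v \<in> K.Ker.span {x0}" unfolding span lc by blast
    qed
  qed
  then have spanning: "finite {x0} \<and> card {x0} = 1 \<and> {x0} \<subseteq> mat_kernel C \<and> K.Ker.span {x0} = mat_kernel C"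
    using sub by simp
  have "K.Ker.dim \<le> 1" unfolding K.Ker.dim_def by (rule Least_le) (rule exI[of _ "{x0}"], rule spanning)
  moreover have "K.Ker.dim \<noteq> 0"
  proof
    assume "K.Ker.dim = 0"
    have "\<exists>S. finite S \<and> card S = K.Ker.dim \<and> S \<subseteq> mat_kernel C \<and> K.Ker.span S = mat_kernel C"
      unfolding K.Ker.dim_def by (rule LeastI_ex) (use spanning in blast)
    then obtain S where "finite S" "card S = 0" "K.Ker.span S = mat_kernel C"
      using \<open>K.Ker.dim = 0\<close> by auto
    then have "mat_kernel C = {0\<^sub>v n}" using K.Ker.span_empty by simp
    then show False using x0 by simp
  qed
  ultimately show ?thesis by simp
qed

lemma mat_kernel_char_matrix:
  fixes M :: "'a :: field mat"
  assumes M: "M \<in> carrier_mat n n"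
  shows "v \<in> mat_kernel (char_matrix M l) \<longleftrightarrow> v \<in> carrier_vec n \<and> M *\<^sub>v v = l \<cdot>\<^sub>v v"
proof -
  have C: "char_matrix M l \<in> carrier_mat n n" using M by simp
  show ?thesis
  proof (cases "v = 0\<^sub>v n")
    case True
    have "0\<^sub>v n \<in> mat_kernel (char_matrix M l)" by (rule mat_kernelI[OF C]) (use C in auto)
    moreover have "M *\<^sub>v 0\<^sub>v n = l \<cdot>\<^sub>v 0\<^sub>v n" using M by (auto intro!: eq_vecI)
    ultimately show ?thesis using True by simp
  next
    case False
    have "v \<in> mat_kernel (char_matrix M l) \<longleftrightarrow> v \<in> carrier_vec n \<and> char_matrix M l *\<^sub>v v = 0\<^sub>v n"
      using mat_kernelI[OF C] mat_kernelD[OF C] by blast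
    also have "\<dots> \<longleftrightarrow> eigenvector M v l" using eigenvector_char_matrix[OF M] False by simp
    also have "\<dots> \<longleftrightarrow> v \<in> carrier_vec n \<and> M *\<^sub>v v = l \<cdot>\<^sub>v v" using False M unfolding eigenvector_def by auto
    finally show ?thesis .
  qed
qed

lemma skew_sum_neg_eigenvectors_parallel:
  fixes A B :: "real mat"
  assumes A: "A \<in> carrier_mat n n" and B: "B \<in> carrier_mat n n" and sym: "transpose_mat A = A"
    and det: "det A \<noteq> 0" and skew: "transpose_mat (A * B) = - (A * B)"
    and plane: "no_negative_plane A n" and "l < 0"
    and v: "v \<in> carrier_vec n" "(A + B) *\<^sub>v v = l \<cdot>\<^sub>v v"
    and x0: "x0 \<in> carrier_vec n" "x0 \<noteq> 0\<^sub>v n" "(A + B) *\<^sub>v x0 = l \<cdot>\<^sub>v x0"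
  shows "\<exists>c. v = c \<cdot>\<^sub>v x0"
proof -
  obtain a b where ab: "a \<noteq> 0 \<or> b \<noteq> 0"
    and nonneg: "0 \<le> (a \<cdot>\<^sub>v v + b \<cdot>\<^sub>v x0) \<bullet> (A *\<^sub>v (a \<cdot>\<^sub>v v + b \<cdot>\<^sub>v x0))"
    using plane v x0 unfolding no_negative_plane_def by blast
  define z where "z = a \<cdot>\<^sub>v v + b \<cdot>\<^sub>v x0"
  have z: "z \<in> carrier_vec n" unfolding z_def using v x0 by simp
  have M: "A + B \<in> carrier_mat n n" using A B by simp
  have "(A + B) *\<^sub>v z = a \<cdot>\<^sub>v ((A + B) *\<^sub>v v) + b \<cdot>\<^sub>v ((A + B) *\<^sub>v x0)"
    unfolding z_def using v x0 by (simp add: mult_add_distrib_mat_vec[OF M] mult_mat_vec[OF M])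
  also have "\<dots> = l \<cdot>\<^sub>v z"
    unfolding z_def v(2) x0(3) using v x0 by (intro eq_vecI) (auto simp: algebra_simps)
  finally have Mz: "(A + B) *\<^sub>v z = l \<cdot>\<^sub>v z" .
  have z0: "z = 0\<^sub>v n"
  proof (rule ccontr)
    assume "z \<noteq> 0\<^sub>v n"
    with z Mz have "z \<bullet> (A *\<^sub>v z) < 0"
      by (intro skew_sum_neg_eigenvector_quad_neg[OF A B sym det skew _ _ _ \<open>l < 0\<close>])
    with nonneg show False unfolding z_def by linarith
  qed
  have comp: "a * v $ i + b * x0 $ i = 0" if "i < n" for i
  proof -
    have "(a \<cdot>\<^sub>v v + b \<cdot>\<^sub>v x0) $ i = 0" using z0 that unfolding z_def by simp
    then show ?thesis using that v x0 by simp
  qed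
  have "a \<noteq> 0"
  proof
    assume "a = 0"
    then have "x0 = 0\<^sub>v n" using ab comp x0 by (intro eq_vecI) auto
    with x0 show False by simp
  qed
  have "v = (- b / a) \<cdot>\<^sub>v x0"
  proof (rule eq_vecI)
    fix i assume "i < dim_vec ((- b / a) \<cdot>\<^sub>v x0)"
    then have "i < n" using x0 by simp
    then have "a * v $ i = - (b * x0 $ i)" using comp by (simp add: eq_neg_iff_add_eq_0)
    then show "v $ i = ((- b / a) \<cdot>\<^sub>v x0) $ i" using \<open>a \<noteq> 0\<close> \<open>i < n\<close> x0 by (simp add: field_simps)
  qed (use v x0 in simp)
  then show ?thesis by blast
qed

lemma skew_sum_neg_eigenvalue_geom_mult:
  fixes A B :: "real mat"
  assumes A: "A \<in> carrier_mat n n" and B: "B \<in> carrier_mat n n" and sym: "transpose_mat A = A"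
    and det: "det A \<noteq> 0" and skew: "transpose_mat (A * B) = - (A * B)"
    and plane: "no_negative_plane A n" and l: "eigenvalue (A + B) l" "l < 0"
  shows "geom_mult (A + B) l = 1"
proof -
  have M: "A + B \<in> carrier_mat n n" using A B by simp
  define C where "C = char_matrix (A + B) l"
  have C: "C \<in> carrier_mat n n" unfolding C_def using M by simp
  note kernel = mat_kernel_char_matrix[OF M, of _ l, folded C_def]
  obtain x0 where x0: "x0 \<in> mat_kernel C" "x0 \<noteq> 0\<^sub>v n"
    using l(1) M unfolding eigenvalue_def eigenvector_def kernel by auto
  have "\<exists>c. v = c \<cdot>\<^sub>v x0" if "v \<in> mat_kernel C" for v
    using that x0 unfolding kernel
    by (intro skew_sum_neg_eigenvectors_parallel[OF A B sym det skew plane l(2)]) auto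
  then have "kernel_dim C = 1" by (rule kernel_dim_eq_1I[OF C x0])
  then show ?thesis unfolding geom_mult_def dim_gen_eigenspace_def C_def by simp
qed

theorem lemma4p4:
  fixes A B :: "real mat" and n :: nat
  assumes "A \<in> carrier_mat n n" and "B \<in> carrier_mat n n"
    and "transpose_mat A = A"
    and "det A \<noteq> 0"
    and "neg_eig_count A = 1"
    and "transpose_mat (A * B) = - (A * B)"
  shows "invertible_mat (A + B) \<and>
         (\<exists>!k. eigenvalue (A + B) k \<and> k < 0) \<and>
         (\<forall>k. eigenvalue (A + B) k \<and> k < 0 \<longrightarrow> geom_mult (A + B) k = 1)"
proof -
  note A = assms(1) and B = assms(2) and sym = assms(3) and det = assms(4)
    and neg = assms(5) and skew = assms(6)
  note skew_sum = A B sym det skew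
  have M: "A + B \<in> carrier_mat n n" using A B by simp
  have plane: "no_negative_plane A n" by (rule neg_eig_count_one_no_negative_plane[OF A sym det neg])
  have "det A < 0" by (rule neg_eig_count_one_det_neg[OF A sym det neg])
  then have "det (A + B) < 0" using skew_sum_det_same_sign[OF skew_sum] by (simp add: zero_less_mult_iff)
  then obtain k where "k < 0" "eigenvalue (A + B) k" by (rule det_neg_imp_neg_eigenvalue[OF M])
  then have "\<exists>!k. eigenvalue (A + B) k \<and> k < 0"
    using skew_sum_neg_eigenvalue_unique[OF skew_sum plane] by blast
  moreover have "invertible_mat (A + B)"
    using invertible_mat_if_det_nonzero[OF M skew_sum_det_nonzero[OF skew_sum]] .
  moreover have "\<forall>k. eigenvalue (A + B) k \<and> k < 0 \<longrightarrow> geom_mult (A + B) k = 1"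
    using skew_sum_neg_eigenvalue_geom_mult[OF skew_sum plane] by blast
  ultimately show ?thesis by blast
qed

end
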